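(* Let $\gamma$ be a pure loxodromic isometry of $\mathbb{H}^4$ with axis $L$ and twisting plane $P$. Then a plane $Q\subset\mathbb{H}^4$ is orthogonal to both $P$ and $L$, with $Q$ meeting $P$ orthogonally through a line in $P$, if and only if $\partial Q\in\mathcal{K}_\gamma$.
   Context: A pure loxodromic isometry is a hyperbolic isometry $\gamma$ of $\mathbb{H}^4$, with axis $L$, that can be written as $\gamma=\delta\rho$. Here $\delta$ is a pure hyperbolic isometry (composition of reflections in two ultra-parallel hyperplanes) leaving $L$ invariant, and $\rho$ is a type-I elliptic isometry (composition of reflections in two hyperplanes meeting in a plane) whose fixed plane contains $L$. This fixed plane $P$ is the twisting plane of $\gamma$. The permuted pencil $\mathcal{F}_\gamma$ is the set of boundaries at infinity of the hyperplanes orthogonal to $L$. The twisting pencil $\mathcal{R}_\gamma$ is the set of boundaries of hyperplanes containing $P$. The half-turn bank is $\mathcal{K}_\gamma=\{s\cap t: s\in\mathcal{F}_\gamma,\ t\in\mathcal{R}_\gamma\}$. *)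

theory Defs
  imports "HOL-Analysis.Analysis"
begin

text \<open>Hyperboloid model of hyperbolic 4-space inside Minkowski space R^(4,1),
  realised as real^5 with coordinate 0 the time-like coordinate.\<close>

definition minner :: "real^5 \<Rightarrow> real^5 \<Rightarrow> real" where
  "minner x y = (\<Sum>i\<in>UNIV. x$i * y$i) - 2 * (x$0 * y$0)"

definition H4 :: "(real^5) set" where
  "H4 = {x. minner x x = -1 \<and> x$0 > 0}"

definition hyp_subspace :: "nat \<Rightarrow> (real^5) set \<Rightarrow> bool" where
  "hyp_subspace k S \<longleftrightarrow>
     (\<exists>V. subspace V \<and> dim V = Suc k \<and> S = V \<inter> H4) \<and> S \<noteq> {}"

abbreviation hyp_line :: "(real^5) set \<Rightarrow> bool" where
  "hyp_line \<equiv> hyp_subspace 1"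

abbreviation hyp_plane :: "(real^5) set \<Rightarrow> bool" where
  "hyp_plane \<equiv> hyp_subspace 2"

abbreviation hyp_hyperplane :: "(real^5) set \<Rightarrow> bool" where
  "hyp_hyperplane \<equiv> hyp_subspace 3"

definition tangent :: "(real^5) set \<Rightarrow> real^5 \<Rightarrow> (real^5) set" where
  "tangent S x = {v. v \<in> span S \<and> minner v x = 0}"

text \<open>Boundary at infinity: ideal points are the null vectors with time
  coordinate 1 (a model of the sphere at infinity S^3); the boundary of S is the
  set of ideal points in the closure of the projective (Klein) image of S.\<close>
definition bdry :: "(real^5) set \<Rightarrow> (real^5) set" where
  "bdry S = closure ((\<lambda>x. (1 / x$0) *\<^sub>R x) ` S) \<inter> {u. minner u u = 0}"

definition is_reflection :: "(real^5) set \<Rightarrow> (real^5 \<Rightarrow> real^5) \<Rightarrow> bool" where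
  "is_reflection S f \<longleftrightarrow> hyp_hyperplane S \<and>
     (\<exists>n. minner n n > 0 \<and> S = {x\<in>H4. minner x n = 0} \<and>
          f = (\<lambda>x. x - (2 * minner x n / minner n n) *\<^sub>R n))"

text \<open>Two hyperplanes are ultra-parallel if their closures in the compactified
  space are disjoint.\<close>
definition ultraparallel :: "(real^5) set \<Rightarrow> (real^5) set \<Rightarrow> bool" where
  "ultraparallel S T \<longleftrightarrow> hyp_hyperplane S \<and> hyp_hyperplane T \<and>
     S \<inter> T = {} \<and> bdry S \<inter> bdry T = {}"

definition pure_hyperbolic :: "(real^5 \<Rightarrow> real^5) \<Rightarrow> bool" where
  "pure_hyperbolic d \<longleftrightarrow> (\<exists>S T f g. ultraparallel S T \<and> is_reflection S f \<and>
     is_reflection T g \<and> d = f \<circ> g)"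

definition typeI_elliptic :: "(real^5 \<Rightarrow> real^5) \<Rightarrow> bool" where
  "typeI_elliptic r \<longleftrightarrow> (\<exists>S T f g. hyp_hyperplane S \<and> hyp_hyperplane T \<and>
     hyp_plane (S \<inter> T) \<and> is_reflection S f \<and> is_reflection T g \<and> r = f \<circ> g)"

definition fixed_set :: "(real^5 \<Rightarrow> real^5) \<Rightarrow> (real^5) set" where
  "fixed_set f = {x\<in>H4. f x = x}"

definition pure_loxodromic :: "(real^5 \<Rightarrow> real^5) \<Rightarrow> (real^5) set \<Rightarrow> (real^5) set \<Rightarrow> bool" where
  "pure_loxodromic g L P \<longleftrightarrow> hyp_line L \<and>
     (\<exists>d r. pure_hyperbolic d \<and> typeI_elliptic r \<and> g = d \<circ> r \<and>
        d ` L = L \<and> P = fixed_set r \<and> L \<subseteq> P)"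

text \<open>A and B meet orthogonally in a single point (used for line/plane and
  line/hyperplane orthogonality).\<close>
definition orth_at_point :: "(real^5) set \<Rightarrow> (real^5) set \<Rightarrow> bool" where
  "orth_at_point A B \<longleftrightarrow> (\<exists>x. A \<inter> B = {x} \<and>
     (\<forall>u\<in>tangent A x. \<forall>v\<in>tangent B x. minner u v = 0))"

text \<open>Q meets P orthogonally through a line: Q \<inter> P is a line, and the
  orthogonal complements of that line in Q and in P are orthogonal.\<close>
definition orth_along_line :: "(real^5) set \<Rightarrow> (real^5) set \<Rightarrow> bool" where
  "orth_along_line Q P \<longleftrightarrow> hyp_line (Q \<inter> P) \<and>
     (\<forall>x\<in>Q \<inter> P. \<forall>u\<in>tangent Q x. \<forall>v\<in>tangent P x.
        (\<forall>w\<in>tangent (Q \<inter> P) x. minner u w = 0) \<longrightarrow>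
        (\<forall>w\<in>tangent (Q \<inter> P) x. minner v w = 0) \<longrightarrow> minner u v = 0)"

definition permuted_pencil :: "(real^5) set \<Rightarrow> (real^5) set set" where
  "permuted_pencil L = {bdry S | S. hyp_hyperplane S \<and> orth_at_point S L}"

definition twisting_pencil :: "(real^5) set \<Rightarrow> (real^5) set set" where
  "twisting_pencil P = {bdry S | S. hyp_hyperplane S \<and> P \<subseteq> S}"

definition half_turn_bank :: "(real^5) set \<Rightarrow> (real^5) set \<Rightarrow> (real^5) set set" where
  "half_turn_bank L P = {s \<inter> t | s t. s \<in> permuted_pencil L \<and> t \<in> twisting_pencil P}"

end

theory Submission
  imports Defs
begin

text \<open>In the hyperboloid model every totally geodesic subspace is cut out by a linear subspace
  of Minkowski space, and its ideal points span that linear subspace, so boundaries at infinity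
  intersect exactly as the linear subspaces do. If the plane Q is orthogonal to L at x, it lies in
  the hyperplane S orthogonal to L at x; since Q meets P in a line, Q and P together span a
  hyperplane T containing P, and a dimension count gives Q = S \<inter> T. Conversely, if the boundary
  of Q is that of S \<inter> T, then Q = S \<inter> T: it lies in S, hence is orthogonal to L, and it meets
  P in the line S \<inter> P. A tangent vector of Q orthogonal to that line is orthogonal to S \<inter> P and,
  lying in S, to L; as S \<inter> P and L together span P, it is orthogonal to all of P.\<close>

section \<open>Minkowski space\<close>

lemma UNIV_5: "(UNIV :: 5 set) = {0, 1, 2, 3, 4}"
proof -
  have "x \<in> {0, 1, 2, 3, 4}" for x :: 5
  proof (induct x)
    case (of_int z)
    then have "z = 0 \<or> z = 1 \<or> z = 2 \<or> z = 3 \<or> z = 4" by fastforce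
    then show ?case by auto
  qed
  then show ?thesis by blast
qed

lemma vec_eq_5_iff:
  "(x :: real^5) = y \<longleftrightarrow> x$0 = y$0 \<and> x$1 = y$1 \<and> x$2 = y$2 \<and> x$3 = y$3 \<and> x$4 = y$4"
  unfolding vec_eq_iff ball_UNIV[symmetric] UNIV_5 by simp

lemma minner_expand: "minner x y = x$1 * y$1 + x$2 * y$2 + x$3 * y$3 + x$4 * y$4 - x$0 * y$0"
  unfolding minner_def UNIV_5 by simp

lemma minner_commute: "minner x y = minner y x" by (simp add: minner_expand algebra_simps)

lemma minner_add_left: "minner (x + y) z = minner x z + minner y z" by (simp add: minner_expand algebra_simps)

lemma minner_add_right: "minner z (x + y) = minner z x + minner z y" by (simp add: minner_expand algebra_simps)

lemma minner_diff_left: "minner (x - y) z = minner x z - minner y z" by (simp add: minner_expand algebra_simps)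

lemma minner_diff_right: "minner z (x - y) = minner z x - minner z y" by (simp add: minner_expand algebra_simps)

lemma minner_scaleR_left: "minner (c *\<^sub>R x) z = c * minner x z" by (simp add: minner_expand algebra_simps)

lemma minner_scaleR_right: "minner z (c *\<^sub>R x) = c * minner z x" by (simp add: minner_expand algebra_simps)

lemma minner_minus_left: "minner (- x) z = - minner x z" by (simp add: minner_expand algebra_simps)

lemma minner_minus_right: "minner z (- x) = - minner z x" by (simp add: minner_expand algebra_simps)

lemma minner_zero_left: "minner 0 z = 0" by (simp add: minner_expand)

lemma minner_zero_right: "minner z 0 = 0" by (simp add: minner_expand)

lemmas minner_simps = minner_add_left minner_add_right minner_diff_left minner_diff_right
  minner_scaleR_left minner_scaleR_right minner_minus_left minner_minus_right
  minner_zero_left minner_zero_right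

definition flip_time :: "real^5 \<Rightarrow> real^5" where
  "flip_time v = (\<chi> i. if i = 0 then - v$i else v$i)"

lemma minner_eq_inner_flip_time: "minner x y = x \<bullet> flip_time y"
  unfolding minner_expand inner_vec_def UNIV_5 flip_time_def by simp

lemma flip_time_flip_time [simp]: "flip_time (flip_time v) = v"
  unfolding flip_time_def by (simp add: vec_eq_iff)

lemma flip_time_eq_0_iff [simp]: "flip_time v = 0 \<longleftrightarrow> v = 0"
  by (metis flip_time_flip_time minner_eq_inner_flip_time minner_zero_right inner_eq_zero_iff)

lemma subspace_minner_orthogonal: "subspace {v. minner v a = 0}"
  unfolding subspace_def by (auto simp: minner_simps)

lemma dim_minner_orthogonal:
  assumes "a \<noteq> 0"
  shows "dim {v. minner v a = 0} = 4"
proof -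
  have "{v. minner v a = 0} = {v. flip_time a \<bullet> v = 0}"
    by (auto simp: minner_eq_inner_flip_time inner_commute)
  moreover have "dim {v. flip_time a \<bullet> v = 0} = DIM(real^5) - 1"
    using assms by (intro dim_hyperplane) simp
  ultimately show ?thesis by simp
qed

lemma exists_minner_orthogonal:
  assumes "dim W < 5"
  obtains m where "m \<noteq> 0" "\<And>y. y \<in> W \<Longrightarrow> minner y m = 0"
proof -
  obtain a where "a \<noteq> 0" "\<And>y. y \<in> span W \<Longrightarrow> orthogonal a y"
    using orthogonal_to_subspace_exists[of W] assms by auto
  then show ?thesis
    by (intro that[of "flip_time a"])
      (auto simp: minner_eq_inner_flip_time orthogonal_def inner_commute span_base)
qed

section \<open>The hyperboloid and its totally geodesic subspaces\<close>

lemma H4_minner_self: "x \<in> H4 \<Longrightarrow> minner x x = -1"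
  by (simp add: H4_def)

lemma H4_nonzero: "x \<in> H4 \<Longrightarrow> x \<noteq> 0"
  by (auto simp: H4_def)

lemma minner_self_nonneg_if_time_0: "w$0 = 0 \<Longrightarrow> 0 \<le> minner w w"
  by (simp add: minner_expand)

lemma eq_0_if_null_time_0:
  assumes "n$0 = 0" "minner n n = 0"
  shows "n = 0"
proof -
  have "n$1 * n$1 + n$2 * n$2 + n$3 * n$3 + n$4 * n$4 = 0"
    using assms by (simp add: minner_expand)
  then have "n$1 = 0" "n$2 = 0" "n$3 = 0" "n$4 = 0"
    by (smt (verit) zero_le_square mult_eq_0_iff)+
  with assms(1) show ?thesis by (simp add: vec_eq_5_iff)
qed

lemma minner_self_pos_if_orthogonal_H4:
  assumes x: "x \<in> H4" and o: "minner e x = 0" and e: "e \<noteq> 0"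
  shows "minner e e > 0"
proof -
  have h2: "x$0^2 = 1 + x$1^2 + x$2^2 + x$3^2 + x$4^2" and x0: "x$0 > 0"
    using x by (auto simp: H4_def minner_expand power2_eq_square)
  have h1: "x$0 * e$0 = x$1*e$1 + x$2*e$2 + x$3*e$3 + x$4*e$4"
    using o by (simp add: minner_expand algebra_simps)
  define S where "S = e$1^2 + e$2^2 + e$3^2 + e$4^2"
  define R where "R = (x$1*e$2 - x$2*e$1)^2 + (x$1*e$3 - x$3*e$1)^2 + (x$1*e$4 - x$4*e$1)^2
     + (x$2*e$3 - x$3*e$2)^2 + (x$2*e$4 - x$4*e$2)^2 + (x$3*e$4 - x$4*e$3)^2"
  \<comment> \<open>Lagrange's identity for the spatial parts of x and e\<close>
  have "x$0^2 * minner e e = x$0^2 * S - (x$0 * e$0)^2"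
    by (simp add: minner_expand S_def power2_eq_square algebra_simps)
  also have "\<dots> = S + R"
    unfolding h1 h2 S_def R_def by (simp add: power2_eq_square algebra_simps)
  finally have eq: "x$0^2 * minner e e = S + R" .
  show ?thesis
  proof (cases "S = 0")
    case True
    then have "e$1 = 0" "e$2 = 0" "e$3 = 0" "e$4 = 0" unfolding S_def
      by (smt (verit) power2_less_eq_zero_iff zero_le_power2)+
    moreover from this h1 x0 have "e$0 = 0" by simp
    ultimately have "e = 0" by (simp add: vec_eq_5_iff)
    with e show ?thesis by simp
  next
    case False
    moreover have "S \<ge> 0" "R \<ge> 0" unfolding S_def R_def by simp_all
    ultimately have "x$0^2 * minner e e > 0" using eq by simp
    then show ?thesis using x0 by (simp add: zero_less_mult_iff)
  qed
qed

lemma H4_scaleR_eq_1: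
  assumes "x \<in> H4" "c *\<^sub>R x \<in> H4"
  shows "c = 1"
proof -
  have "c^2 * minner x x = -1" "minner x x = -1" "c * x$0 > 0" "x$0 > 0"
    using assms by (auto simp: H4_def minner_simps power2_eq_square)
  then have "c^2 = 1" "c > 0" by (auto simp: zero_less_mult_iff)
  then show ?thesis by (simp add: power2_eq_1_iff)
qed

lemma timelike_in_span_Int_H4:
  assumes V: "subspace V" and w: "w \<in> V" and neg: "minner w w < 0"
  shows "w \<in> span (V \<inter> H4)"
proof -
  have w0: "w$0 \<noteq> 0" using minner_self_nonneg_if_time_0 neg by force
  define c where "c = sgn (w$0) * sqrt (- minner w w)"
  have "c \<noteq> 0" using w0 neg by (simp add: c_def sgn_if)
  have cc: "c * c = - minner w w" using neg w0 by (simp add: c_def sgn_if)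
  define h where "h = (1 / c) *\<^sub>R w"
  have "minner h h = minner w w / (c * c)" by (simp add: h_def minner_simps)
  then have "minner h h = -1" using cc neg by simp
  moreover have "h$0 > 0"
    using w0 neg by (simp add: h_def c_def sgn_if divide_simps)
  moreover have "h \<in> V" using V w by (simp add: h_def subspace_scale)
  ultimately have "h \<in> span (V \<inter> H4)" by (simp add: H4_def span_base)
  then have "c *\<^sub>R h \<in> span (V \<inter> H4)" by (rule span_mul)
  then show ?thesis using \<open>c \<noteq> 0\<close> by (simp add: h_def)
qed

lemma span_Int_H4:
  assumes V: "subspace V" and p: "p \<in> V" "p \<in> H4"
  shows "span (V \<inter> H4) = V"
proof (rule span_subspace)
  show "V \<subseteq> span (V \<inter> H4)"
  proof
    fix v assume v: "v \<in> V"
    define a where "a = minner p v"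
    define b where "b = minner v v"
    \<comment> \<open>moving far enough along the timelike p makes v timelike\<close>
    define K where "K = 2 * \<bar>a\<bar> + \<bar>b\<bar> + 1"
    have "K \<ge> 1" by (simp add: K_def)
    then have "2 * K * a \<le> K * (2 * \<bar>a\<bar>)" by (simp add: mult_left_mono)
    have "b \<le> K * \<bar>b\<bar>" using \<open>K \<ge> 1\<close>
      by (metis abs_ge_self abs_ge_zero dual_order.trans mult_1 mult_right_mono)
    have "minner (K *\<^sub>R p + v) (K *\<^sub>R p + v) = - (K * K) + 2 * K * a + b"
      using H4_minner_self[OF p(2)]
      by (simp add: minner_simps minner_commute[of v p] a_def b_def algebra_simps)
    also have "\<dots> \<le> - (K * K) + K * (2 * \<bar>a\<bar>) + K * \<bar>b\<bar>"
      using \<open>2 * K * a \<le> K * (2 * \<bar>a\<bar>)\<close> \<open>b \<le> K * \<bar>b\<bar>\<close> by simp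
    also have "\<dots> = - K" by (simp add: K_def algebra_simps)
    also have "\<dots> < 0" using \<open>K \<ge> 1\<close> by simp
    finally have "K *\<^sub>R p + v \<in> span (V \<inter> H4)"
      by (intro timelike_in_span_Int_H4 V subspace_add subspace_scale v p)
    moreover have "K *\<^sub>R p \<in> span (V \<inter> H4)" using p by (intro span_mul span_base) auto
    ultimately have "(K *\<^sub>R p + v) - K *\<^sub>R p \<in> span (V \<inter> H4)" by (rule span_diff)
    then show "v \<in> span (V \<inter> H4)" by simp
  qed
qed (use V in auto)

lemma hyp_subspaceI:
  "subspace V \<Longrightarrow> dim V = Suc k \<Longrightarrow> p \<in> V \<Longrightarrow> p \<in> H4 \<Longrightarrow> hyp_subspace k (V \<inter> H4)"
  unfolding hyp_subspace_def by auto

lemma hyp_subspaceD: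
  assumes "hyp_subspace k S"
  shows "subspace (span S)" "dim (span S) = Suc k" "S = span S \<inter> H4" "S \<noteq> {}"
proof -
  obtain V where V: "subspace V" "dim V = Suc k" "S = V \<inter> H4" and ne: "S \<noteq> {}"
    using assms by (auto simp: hyp_subspace_def)
  then have "span S = V" using span_Int_H4 by auto
  then show "subspace (span S)" "dim (span S) = Suc k" "S = span S \<inter> H4" "S \<noteq> {}"
    using V ne by auto
qed

lemma hyp_subspace_subset_H4: "hyp_subspace k S \<Longrightarrow> S \<subseteq> H4"
  using hyp_subspaceD(3) by blast

lemma hyp_subspace_Int_eq:
  "hyp_subspace k S \<Longrightarrow> hyp_subspace j T \<Longrightarrow> S \<inter> T = (span S \<inter> span T) \<inter> H4"
  using hyp_subspaceD(3) by blast

lemma span_Int_hyp_subspace: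
  assumes S: "hyp_subspace k S" and T: "hyp_subspace j T" and x: "x \<in> S \<inter> T"
  shows "span (S \<inter> T) = span S \<inter> span T"
proof -
  have "span ((span S \<inter> span T) \<inter> H4) = span S \<inter> span T"
    using x hyp_subspace_subset_H4[OF S] hyp_subspaceD(1)[OF S] hyp_subspaceD(1)[OF T]
    by (intro span_Int_H4[of _ x]) (auto simp: subspace_inter intro: span_base)
  then show ?thesis using hyp_subspace_Int_eq[OF S T] by simp
qed

lemma tangent_projection:
  assumes "x \<in> S" "x \<in> H4" "u \<in> span S"
  shows "u + minner u x *\<^sub>R x \<in> tangent S x"
  using assms by (simp add: tangent_def span_add span_mul span_base minner_simps H4_minner_self)

lemma minner_span_eq_0_if_orthogonal_tangent:
  assumes "x \<in> S" "x \<in> H4" "minner u x = 0" "\<forall>w\<in>tangent S x. minner u w = 0" "w \<in> span S"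
  shows "minner u w = 0"
proof -
  have "minner u (w + minner w x *\<^sub>R x) = 0" using assms tangent_projection by blast
  then show ?thesis using assms(3) by (simp add: minner_simps)
qed

lemma exists_minner_orthogonal_in_subspace:
  assumes V: "subspace V" and p: "p \<in> V" "p \<in> H4" and d: "2 \<le> dim V"
  obtains e where "e \<in> V" "minner e p = 0" "e \<noteq> 0"
proof -
  have "\<not> V \<subseteq> span {p}"
    using dim_subset[of V "span {p}"] d by (auto split: if_splits)
  then obtain v where v: "v \<in> V" "v \<notin> span {p}" by blast
  show ?thesis
  proof
    show "v + minner v p *\<^sub>R p \<in> V" using V v p by (simp add: subspace_add subspace_scale)
    show "minner (v + minner v p *\<^sub>R p) p = 0" using p by (simp add: minner_simps H4_minner_self)
    show "v + minner v p *\<^sub>R p \<noteq> 0"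
      using v span_mul[OF span_base[of p "{p}"], of "- minner v p"] by (auto simp: add_eq_0_iff)
  qed
qed

lemma dim_2_subspace_decomp:
  assumes V: "subspace V" "dim V = 2" and x: "x \<in> V" "x \<in> H4"
    and e: "e \<in> V" "minner e x = 0" "e \<noteq> 0" and v: "v \<in> V"
  obtains k c where "v = k *\<^sub>R x + c *\<^sub>R e"
proof -
  have "x \<notin> span {e}"
  proof
    assume "x \<in> span {e}"
    then obtain c where "x = c *\<^sub>R e" by (auto simp: span_singleton)
    then have "minner x x = c * minner e x" by (simp add: minner_simps)
    with e(2) H4_minner_self[OF x(2)] show False by simp
  qed
  then have "dim {x, e} = 2" using e by (simp add: dim_insert)
  moreover have "span {x, e} \<subseteq> V" using V x e by (intro span_minimal) auto
  ultimately have "span {x, e} = V" using V by (intro subspace_dim_equal) auto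
  with v obtain k where "v - k *\<^sub>R x \<in> span {e}" by (auto simp: span_insert)
  then obtain c where "v - k *\<^sub>R x = c *\<^sub>R e" by (auto simp: span_singleton)
  then show ?thesis by (intro that[of k c]) (simp add: algebra_simps)
qed

lemma hyp_hyperplane_minner_orthogonal:
  assumes "n \<noteq> 0" "p \<in> H4" "minner p n = 0"
  shows "hyp_hyperplane ({v. minner v n = 0} \<inter> H4)"
  using assms by (intro hyp_subspaceI subspace_minner_orthogonal) (auto simp: dim_minner_orthogonal)

section \<open>Boundary at infinity\<close>

definition ideal_points :: "(real^5) set \<Rightarrow> (real^5) set" where
  "ideal_points V = {u \<in> V. u$0 = 1 \<and> minner u u = 0}"

lemma ideal_points_Int: "ideal_points (A \<inter> B) = ideal_points A \<inter> ideal_points B"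
  by (auto simp: ideal_points_def)

lemma timelike_in_klein_image:
  assumes V: "subspace V" and z: "z \<in> V" "z$0 = 1" "minner z z < 0"
  shows "z \<in> (\<lambda>x. (1 / x$0) *\<^sub>R x) ` (V \<inter> H4)"
proof
  define c where "c = sqrt (- minner z z)"
  have c0: "c > 0" and cc: "c * c = - minner z z" using z by (simp_all add: c_def)
  define h where "h = (1 / c) *\<^sub>R z"
  have "minner h h = minner z z / (c * c)" by (simp add: h_def minner_simps)
  then have "minner h h = -1" using cc z(3) by simp
  moreover have h0: "h$0 = 1 / c" using z by (simp add: h_def)
  ultimately show "h \<in> V \<inter> H4" using c0 V z by (simp add: H4_def h_def subspace_scale)
  show "z = (1 / h$0) *\<^sub>R h" using c0 h0 by (simp add: h_def)
qed

lemma bdry_Int_H4: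
  assumes V: "subspace V" and p: "p \<in> V" "p \<in> H4"
  shows "bdry (V \<inter> H4) = ideal_points V"
proof
  let ?K = "(\<lambda>x. (1 / x$0) *\<^sub>R x) ` (V \<inter> H4)"
  have "closed (V \<inter> {u. u$0 = 1})"
    by (intro closed_Int closed_subspace V closed_Collect_eq continuous_intros)
  moreover have "?K \<subseteq> V \<inter> {u. u$0 = 1}"
    using V by (auto simp: H4_def subspace_scale)
  ultimately have "closure ?K \<subseteq> V \<inter> {u. u$0 = 1}" by (intro closure_minimal)
  then show "bdry (V \<inter> H4) \<subseteq> ideal_points V" by (auto simp: bdry_def ideal_points_def)
  show "ideal_points V \<subseteq> bdry (V \<inter> H4)"
  proof
    fix u assume "u \<in> ideal_points V"
    then have u: "u \<in> V" "u$0 = 1" "minner u u = 0" by (auto simp: ideal_points_def)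
    define k where "k = (1 / p$0) *\<^sub>R p"
    have p0: "p$0 > 0" using p by (simp add: H4_def)
    have k: "k \<in> V" "k$0 = 1" using p0 V p by (auto simp: k_def subspace_scale)
    have kk: "minner k k < 0" using p0 by (simp add: k_def minner_simps H4_minner_self[OF p(2)])
    define D where "D = k - u"
    have D0: "D$0 = 0" using k u by (simp add: D_def)
    have DD: "minner D D \<ge> 0" using minner_self_nonneg_if_time_0[OF D0] .
    \<comment> \<open>points of the Klein model approach u along the segment towards k\<close>
    have near: "u + t *\<^sub>R D \<in> ?K" if t: "0 < t" "t \<le> 1" for t
    proof (rule timelike_in_klein_image[OF V])
      show "u + t *\<^sub>R D \<in> V" using u k V by (simp add: D_def subspace_add subspace_scale subspace_diff)
      show "(u + t *\<^sub>R D) $ 0 = 1" using u D0 by simp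
      have "k = u + D" by (simp add: D_def)
      then have "minner k k = 2 * minner u D + minner D D"
        using u by (simp add: minner_simps minner_commute[of D u])
      then have "minner (u + t *\<^sub>R D) (u + t *\<^sub>R D) = t * minner k k - t * (1 - t) * minner D D"
        using u by (simp add: minner_simps minner_commute[of D u] algebra_simps)
      also have "\<dots> < 0" using t DD kk by (smt (verit) mult_nonneg_nonneg mult_pos_neg)
      finally show "minner (u + t *\<^sub>R D) (u + t *\<^sub>R D) < 0" .
    qed
    have "u \<in> closure ?K"
      unfolding closure_approachable
    proof (intro allI impI)
      fix e :: real assume e: "e > 0"
      define t where "t = min 1 (e / (norm D + 1))"
      have nD: "norm D + 1 > 0" using norm_ge_zero[of D] by linarith
      have t: "0 < t" "t \<le> 1" using e nD by (auto simp: t_def)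
      have "dist (u + t *\<^sub>R D) u = t * norm D" using t by (simp add: dist_norm)
      also have "\<dots> \<le> e / (norm D + 1) * norm D" by (intro mult_right_mono) (auto simp: t_def)
      also have "\<dots> < e" using e nD by (simp add: field_simps)
      finally show "\<exists>y\<in>?K. dist y u < e" using near[OF t] by blast
    qed
    then show "u \<in> bdry (V \<inter> H4)" using u by (simp add: bdry_def)
  qed
qed

lemma bdry_hyp_subspace:
  assumes "hyp_subspace k S"
  shows "bdry S = ideal_points (span S)"
proof -
  obtain p where "p \<in> S" using hyp_subspaceD(4)[OF assms] by blast
  then have "bdry (span S \<inter> H4) = ideal_points (span S)"
    using hyp_subspace_subset_H4[OF assms]
    by (intro bdry_Int_H4[OF hyp_subspaceD(1)[OF assms]]) (auto intro: span_base)
  then show ?thesis using hyp_subspaceD(3)[OF assms] by simp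
qed

lemma null_in_span_ideal_points:
  assumes "subspace V" "n \<in> V" "minner n n = 0" "n \<noteq> 0"
  shows "n \<in> span (ideal_points V)"
proof -
  have n0: "n$0 \<noteq> 0" using eq_0_if_null_time_0 assms by blast
  have "(1 / n$0) *\<^sub>R n \<in> ideal_points V"
    using assms n0 by (simp add: ideal_points_def minner_simps subspace_scale)
  then have "n$0 *\<^sub>R ((1 / n$0) *\<^sub>R n) \<in> span (ideal_points V)" by (intro span_mul span_base)
  then show ?thesis using n0 by simp
qed

lemma span_ideal_points_contains_orthogonal_pair:
  assumes V: "subspace V" and p: "p \<in> V" "p \<in> H4" and w: "w \<in> V" "minner w p = 0" "w \<noteq> 0"
  shows "p \<in> span (ideal_points V)" "w \<in> span (ideal_points V)"
proof -
  \<comment> \<open>p \<plusminus> w / sqrt \<langle>w,w\<rangle> are null vectors of V whose sum and difference give p and w\<close>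
  define k where "k = sqrt (minner w w)"
  have ww: "minner w w > 0" using minner_self_pos_if_orthogonal_H4[OF p(2) w(2,3)] .
  then have k0: "k > 0" and kk: "k * k = minner w w" by (auto simp: k_def)
  define a where "a = p + (1 / k) *\<^sub>R w"
  define b where "b = p - (1 / k) *\<^sub>R w"
  have pp: "minner p p = -1" and wp: "minner p w = 0"
    using p w by (simp_all add: H4_minner_self minner_commute)
  have "minner a a = 0" "minner b b = 0"
    using kk ww by (simp_all add: a_def b_def minner_simps pp wp w(2))
  moreover have "minner p a = -1" "minner p b = -1" by (simp_all add: a_def b_def minner_simps pp wp)
  then have "a \<noteq> 0" "b \<noteq> 0" by (auto simp: minner_zero_right)
  moreover have "a \<in> V" "b \<in> V"
    using V p w by (simp_all add: a_def b_def subspace_add subspace_diff subspace_scale)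
  ultimately have "a \<in> span (ideal_points V)" "b \<in> span (ideal_points V)"
    using null_in_span_ideal_points V by blast+
  then have "(1/2) *\<^sub>R (a + b) \<in> span (ideal_points V)" "(k/2) *\<^sub>R (a - b) \<in> span (ideal_points V)"
    by (simp_all add: span_mul span_add span_diff)
  moreover have "(1/2) *\<^sub>R (a + b) = p" "(k/2) *\<^sub>R (a - b) = w"
    using k0 by (simp_all add: a_def b_def scaleR_2[symmetric] del: scaleR_2)
  ultimately show "p \<in> span (ideal_points V)" "w \<in> span (ideal_points V)" by simp_all
qed

lemma span_ideal_points:
  assumes V: "subspace V" and p: "p \<in> V" "p \<in> H4" and d: "2 \<le> dim V"
  shows "span (ideal_points V) = V"
proof (rule span_subspace)
  note pair = span_ideal_points_contains_orthogonal_pair[OF V p]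
  obtain e where "e \<in> V" "minner e p = 0" "e \<noteq> 0"
    using exists_minner_orthogonal_in_subspace[OF V p d] .
  then have pS: "p \<in> span (ideal_points V)" using pair(1) by blast
  show "V \<subseteq> span (ideal_points V)"
  proof
    fix y assume y: "y \<in> V"
    define w where "w = y + minner y p *\<^sub>R p"
    have "w \<in> V" "minner w p = 0"
      using V y p by (simp_all add: w_def subspace_add subspace_scale minner_simps H4_minner_self)
    then have "w \<in> span (ideal_points V)" using pair(2) by (cases "w = 0") (auto simp: span_zero)
    then have "w - minner y p *\<^sub>R p \<in> span (ideal_points V)" using pS by (intro span_diff span_mul)
    then show "y \<in> span (ideal_points V)" by (simp add: w_def)
  qed
qed (use V in \<open>auto simp: ideal_points_def\<close>)

lemma bdry_subset_iff_span_subset: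
  assumes Q: "hyp_subspace k Q" "1 \<le> k" and S: "hyp_subspace j S"
  shows "bdry Q \<subseteq> bdry S \<longleftrightarrow> span Q \<subseteq> span S"
proof
  assume "bdry Q \<subseteq> bdry S"
  then have "ideal_points (span Q) \<subseteq> span S"
    by (auto simp: bdry_hyp_subspace[OF Q(1)] bdry_hyp_subspace[OF S] ideal_points_def)
  then have "span (ideal_points (span Q)) \<subseteq> span S"
    using hyp_subspaceD(1)[OF S] by (rule span_minimal)
  moreover obtain q where "q \<in> Q" using hyp_subspaceD(4)[OF Q(1)] by blast
  then have "span (ideal_points (span Q)) = span Q"
    using hyp_subspaceD(2)[OF Q(1)] Q(2) hyp_subspace_subset_H4[OF Q(1)]
    by (intro span_ideal_points[OF hyp_subspaceD(1)[OF Q(1)]]) (auto intro: span_base)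
  ultimately show "span Q \<subseteq> span S" by simp
next
  assume "span Q \<subseteq> span S"
  then show "bdry Q \<subseteq> bdry S"
    by (auto simp: bdry_hyp_subspace[OF Q(1)] bdry_hyp_subspace[OF S] ideal_points_def)
qed

lemma subspace_eq_Int_if_dim_Suc:
  fixes A B C :: "'a::euclidean_space set"
  assumes "subspace A" "subspace B" "subspace C" "A \<subseteq> B \<inter> C"
    and "dim B = Suc (dim A)" "\<not> B \<subseteq> C"
  shows "A = B \<inter> C"
proof -
  have "B \<inter> C \<subset> B" using assms(6) by blast
  then have "span (B \<inter> C) \<subset> span B" using assms(2,3) by (metis span_eq_iff subspace_inter)
  then have "dim (B \<inter> C) < dim B" by (rule dim_psubset)
  then show ?thesis using assms by (intro subspace_dim_equal) (auto simp: subspace_inter)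
qed

lemma hyp_subspace_eq_Int_if_bdry_eq_Int:
  assumes Q: "hyp_subspace k Q" "1 \<le> k"
    and S: "hyp_subspace j S" and T: "hyp_subspace j T" and j: "j = Suc k" and "S \<noteq> T"
    and B: "bdry Q = bdry S \<inter> bdry T"
  shows "Q = S \<inter> T"
proof -
  have "span Q \<subseteq> span S \<inter> span T"
    using B bdry_subset_iff_span_subset[OF Q S] bdry_subset_iff_span_subset[OF Q T] by auto
  moreover have "\<not> span S \<subseteq> span T"
  proof
    assume "span S \<subseteq> span T"
    then have "span S = span T"
      using hyp_subspaceD(1,2)[OF S] hyp_subspaceD(1,2)[OF T] by (intro subspace_dim_equal) auto
    then show False using \<open>S \<noteq> T\<close> hyp_subspaceD(3)[OF S] hyp_subspaceD(3)[OF T] by metis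
  qed
  ultimately have "span Q = span S \<inter> span T"
    using hyp_subspaceD(1,2)[OF Q(1)] hyp_subspaceD(1,2)[OF S] hyp_subspaceD(1)[OF T] j
    by (intro subspace_eq_Int_if_dim_Suc) auto
  then show ?thesis using hyp_subspaceD(3)[OF Q(1)] hyp_subspace_Int_eq[OF S T] by metis
qed

section \<open>Reflections\<close>

lemma fixed_set_reflections:
  assumes f: "is_reflection S f" and g: "is_reflection T g" and ST: "hyp_plane (S \<inter> T)"
  shows "fixed_set (f \<circ> g) = S \<inter> T"
proof
  obtain n1 where n1: "minner n1 n1 > 0" "S = {x\<in>H4. minner x n1 = 0}"
      "f = (\<lambda>x. x - (2 * minner x n1 / minner n1 n1) *\<^sub>R n1)" and hS: "hyp_hyperplane S"
    using f by (auto simp: is_reflection_def)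
  obtain n2 where n2: "minner n2 n2 > 0" "T = {x\<in>H4. minner x n2 = 0}"
      "g = (\<lambda>x. x - (2 * minner x n2 / minner n2 n2) *\<^sub>R n2)"
    using g by (auto simp: is_reflection_def)
  show "S \<inter> T \<subseteq> fixed_set (f \<circ> g)" using n1 n2 by (auto simp: fixed_set_def)
  have "S \<noteq> T" using hyp_subspaceD(2)[OF ST] hyp_subspaceD(2)[OF hS] by auto
  show "fixed_set (f \<circ> g) \<subseteq> S \<inter> T"
  proof
    fix x assume "x \<in> fixed_set (f \<circ> g)"
    then have xH: "x \<in> H4" and fx: "f (g x) = x" by (auto simp: fixed_set_def)
    define a where "a = 2 * minner x n2 / minner n2 n2"
    define b where "b = 2 * minner (g x) n1 / minner n1 n1"
    have gx: "g x = x - a *\<^sub>R n2" by (simp add: n2 a_def)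
    have "f (g x) = g x - b *\<^sub>R n1" by (simp add: n1 b_def)
    then have "x = g x - b *\<^sub>R n1" using fx by simp
    then have eq: "a *\<^sub>R n2 + b *\<^sub>R n1 = 0" unfolding gx by (simp add: algebra_simps)
    have "a = 0"
    proof (rule ccontr)
      assume "a \<noteq> 0"
      have "a *\<^sub>R n2 = - (b *\<^sub>R n1)" using eq by (simp add: eq_neg_iff_add_eq_0)
      then have "(1 / a) *\<^sub>R (a *\<^sub>R n2) = (1 / a) *\<^sub>R (- (b *\<^sub>R n1))" by (rule arg_cong)
      then have "n2 = (- b / a) *\<^sub>R n1" using \<open>a \<noteq> 0\<close> by simp
      moreover have "n2 \<noteq> 0" using n2 by (auto simp: minner_zero_left)
      ultimately have "- b / a \<noteq> 0" "n2 = (- b / a) *\<^sub>R n1" by auto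
      then have "T = S" unfolding n1 n2 by (auto simp: minner_simps)
      with \<open>S \<noteq> T\<close> show False by simp
    qed
    moreover have "n1 \<noteq> 0" using n1 by (auto simp: minner_zero_left)
    ultimately have "b = 0" using eq by simp
    with \<open>a = 0\<close> show "x \<in> S \<inter> T" using xH n1 n2 gx by (auto simp: a_def b_def)
  qed
qed

lemma pure_loxodromicD:
  assumes "pure_loxodromic g L P"
  shows "hyp_line L" "hyp_plane P" "L \<subseteq> P"
proof -
  obtain r where r: "typeI_elliptic r" "P = fixed_set r" "L \<subseteq> P" and L: "hyp_line L"
    using assms by (auto simp: pure_loxodromic_def)
  obtain S T f g' where "hyp_plane (S \<inter> T)" "is_reflection S f" "is_reflection T g'" "r = f \<circ> g'"
    using r(1) by (auto simp: typeI_elliptic_def)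
  then show "hyp_plane P" using fixed_set_reflections r(2) by simp
  show "hyp_line L" "L \<subseteq> P" by fact+
qed

section \<open>Orthogonality and the half-turn bank\<close>

lemma orth_at_point_minner_orthogonal:
  assumes L: "hyp_line L" and x: "x \<in> L" and e: "e \<in> span L" "minner e x = 0" "e \<noteq> 0"
  shows "orth_at_point ({v. minner v e = 0} \<inter> H4) L"
  unfolding orth_at_point_def
proof (intro exI conjI ballI)
  let ?V = "{v. minner v e = 0}"
  have xH: "x \<in> H4" using x hyp_subspace_subset_H4[OF L] by blast
  have "dim (span L) = 2" using hyp_subspaceD(2)[OF L] by simp
  note decomp = dim_2_subspace_decomp[OF hyp_subspaceD(1)[OF L] this span_base[OF x] xH e]
  have ex: "minner x e = 0" using e(2) by (simp add: minner_commute)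
  show "(?V \<inter> H4) \<inter> L = {x}"
  proof
    show "{x} \<subseteq> (?V \<inter> H4) \<inter> L" using ex xH x by auto
    show "(?V \<inter> H4) \<inter> L \<subseteq> {x}"
    proof
      fix y assume y: "y \<in> (?V \<inter> H4) \<inter> L"
      then obtain k c where yd: "y = k *\<^sub>R x + c *\<^sub>R e" using decomp span_base by blast
      have "c * minner e e = 0" using y ex by (simp add: yd minner_simps)
      then have "c = 0" using minner_self_pos_if_orthogonal_H4[OF xH e(2,3)] by simp
      then have "k = 1" using y yd H4_scaleR_eq_1[OF xH] by auto
      then show "y \<in> {x}" using yd \<open>c = 0\<close> by simp
    qed
  qed
  fix u v assume u: "u \<in> tangent (?V \<inter> H4) x" and v: "v \<in> tangent L x"
  have "span (?V \<inter> H4) = ?V" using ex xH by (intro span_Int_H4 subspace_minner_orthogonal) auto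
  then have ue: "minner u e = 0" using u by (simp add: tangent_def)
  obtain k c where vd: "v = k *\<^sub>R x + c *\<^sub>R e" using v decomp by (auto simp: tangent_def)
  have "k = 0" using v e(2) H4_minner_self[OF xH] by (simp add: tangent_def vd minner_simps)
  then show "minner u v = 0" using ue by (simp add: vd minner_simps)
qed

lemma span_subset_minner_orthogonal_if_orth_at_point:
  assumes "Q \<inter> L = {x}" "\<forall>u\<in>tangent Q x. \<forall>v\<in>tangent L x. minner u v = 0" "x \<in> H4"
    and "e \<in> tangent L x"
  shows "span Q \<subseteq> {v. minner v e = 0}"
proof -
  have "minner e w = 0" if "w \<in> span Q" for w
  proof (rule minner_span_eq_0_if_orthogonal_tangent[of x Q])
    show "x \<in> Q" "x \<in> H4" "w \<in> span Q" using assms(1,3) that by auto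
    show "minner e x = 0" using assms(4) by (simp add: tangent_def)
    show "\<forall>w\<in>tangent Q x. minner e w = 0" using assms(2,4) minner_commute by metis
  qed
  then show ?thesis by (auto simp: minner_commute[of _ e])
qed

lemma exists_common_minner_normal:
  assumes Q: "hyp_plane Q" and P: "hyp_plane P" and QP: "hyp_line (Q \<inter> P)"
  obtains m where "m \<noteq> 0" "span Q \<subseteq> {v. minner v m = 0}" "span P \<subseteq> {v. minner v m = 0}"
proof -
  obtain x where "x \<in> Q \<inter> P" using hyp_subspaceD(4)[OF QP] by blast
  then have "dim (span Q \<inter> span P) = 2"
    using hyp_subspaceD(2)[OF QP] span_Int_hyp_subspace[OF Q P] by simp
  define W where "W = {a + b |a b. a \<in> span Q \<and> b \<in> span P}"
  have "dim W = 4"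
    using dim_sums_Int[OF hyp_subspaceD(1)[OF Q] hyp_subspaceD(1)[OF P], folded W_def]
      \<open>dim (span Q \<inter> span P) = 2\<close> hyp_subspaceD(2)[OF Q] hyp_subspaceD(2)[OF P] by simp
  then obtain m where m: "m \<noteq> 0" "\<And>y. y \<in> W \<Longrightarrow> minner y m = 0"
    using exists_minner_orthogonal[of W] by auto
  have "span Q \<subseteq> W" "span P \<subseteq> W"
    unfolding W_def by (force intro: span_zero)+
  with m show ?thesis using that by blast
qed

lemma orth_at_point_subset:
  assumes "orth_at_point S L" "Q \<subseteq> S" "S \<inter> L \<subseteq> Q"
  shows "orth_at_point Q L"
proof -
  obtain x where x: "S \<inter> L = {x}" and orth: "\<forall>u\<in>tangent S x. \<forall>v\<in>tangent L x. minner u v = 0"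
    using assms(1) by (auto simp: orth_at_point_def)
  have "Q \<inter> L = {x}" using x assms(2,3) by blast
  moreover have "tangent Q x \<subseteq> tangent S x" using span_mono[OF assms(2)] by (auto simp: tangent_def)
  ultimately show ?thesis using orth by (auto simp: orth_at_point_def)
qed

lemma span_not_subset_if_orth_at_point:
  assumes L: "hyp_line L" and S: "hyp_subspace k S" and SL: "orth_at_point S L"
  shows "\<not> span L \<subseteq> span S"
proof
  assume "span L \<subseteq> span S"
  then have "L \<subseteq> S" using hyp_subspaceD(3)[OF L] hyp_subspaceD(3)[OF S] by blast
  moreover obtain x where "S \<inter> L = {x}" using SL by (auto simp: orth_at_point_def)
  ultimately have "L = {x}" by blast
  then show False using hyp_subspaceD(2)[OF L] by (simp split: if_splits)
qed

lemma hyp_line_Int_plane_if_orth_at_point: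
  assumes L: "hyp_line L" and P: "hyp_plane P" "L \<subseteq> P"
    and S: "hyp_hyperplane S" "orth_at_point S L"
  shows "hyp_line (S \<inter> P)"
proof -
  obtain x where x: "S \<inter> L = {x}" using S(2) by (auto simp: orth_at_point_def)
  have "span L \<subseteq> span P" using P(2) by (rule span_mono)
  then have "span S \<inter> span P \<subset> span P"
    using span_not_subset_if_orth_at_point[OF L S(1,2)] by blast
  then have "dim (span S \<inter> span P) < dim (span P)"
    using hyp_subspaceD(1)[OF P(1)] hyp_subspaceD(1)[OF S(1)]
    by (metis dim_psubset span_eq_iff subspace_inter)
  moreover have "dim {a + b |a b. a \<in> span S \<and> b \<in> span P} \<le> 5"
    using dim_subset_UNIV[of "{a + b |a b. a \<in> span S \<and> b \<in> span P}"] by simp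
  ultimately have "dim (span S \<inter> span P) = Suc 1"
    using dim_sums_Int[OF hyp_subspaceD(1)[OF S(1)] hyp_subspaceD(1)[OF P(1)]]
      hyp_subspaceD(2)[OF S(1)] hyp_subspaceD(2)[OF P(1)] by simp
  moreover have "x \<in> span S \<inter> span P" "x \<in> H4"
    using x P(2) hyp_subspace_subset_H4[OF L] by (auto intro: span_base)
  ultimately have "hyp_line ((span S \<inter> span P) \<inter> H4)"
    using hyp_subspaceD(1)[OF S(1)] hyp_subspaceD(1)[OF P(1)]
    by (intro hyp_subspaceI) (auto simp: subspace_inter)
  then show ?thesis using hyp_subspace_Int_eq[OF S(1) P(1)] by simp
qed

lemma span_plane_eq_sums_if_orth_at_point:
  assumes L: "hyp_line L" and P: "hyp_plane P" "L \<subseteq> P"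
    and S: "hyp_hyperplane S" "orth_at_point S L"
  shows "span P = {a + b |a b. a \<in> span (S \<inter> P) \<and> b \<in> span L}"
    (is "_ = ?W")
proof -
  note SP = hyp_line_Int_plane_if_orth_at_point[OF assms]
  obtain x where x: "S \<inter> L = {x}" using S(2) by (auto simp: orth_at_point_def)
  have "span (S \<inter> P) \<inter> span L \<subseteq> span {x}"
    using span_Int_hyp_subspace[OF S(1) L] x span_mono[of "S \<inter> P" S] by auto
  moreover have "x \<noteq> 0" using x hyp_subspace_subset_H4[OF L] H4_nonzero by blast
  ultimately have "dim (span (S \<inter> P) \<inter> span L) \<le> 1"
    using dim_subset[of "span (S \<inter> P) \<inter> span L" "span {x}"] by simp
  then have "dim (span P) \<le> dim ?W"
    using dim_sums_Int[OF hyp_subspaceD(1)[OF SP] hyp_subspaceD(1)[OF L]]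
      hyp_subspaceD(2)[OF SP] hyp_subspaceD(2)[OF L] hyp_subspaceD(2)[OF P(1)] by simp
  moreover have "?W \<subseteq> span P"
    using span_mono[of "S \<inter> P" P] span_mono[OF P(2)] by (auto intro: span_add)
  ultimately show ?thesis
    using subspace_sums[OF hyp_subspaceD(1)[OF SP] hyp_subspaceD(1)[OF L]] hyp_subspaceD(1)[OF P(1)]
    by (intro subspace_dim_equal[symmetric]) auto
qed

lemma exists_hyperplanes_if_orthogonal:
  assumes L: "hyp_line L" and P: "hyp_plane P" "L \<subseteq> P" and Q: "hyp_plane Q"
    and QL: "orth_at_point Q L" and QP: "hyp_line (Q \<inter> P)"
  obtains S T where "hyp_hyperplane S" "orth_at_point S L" "hyp_hyperplane T" "P \<subseteq> T"
    "bdry Q = bdry S \<inter> bdry T"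
proof -
  obtain x where x: "Q \<inter> L = {x}" and tQL: "\<forall>u\<in>tangent Q x. \<forall>v\<in>tangent L x. minner u v = 0"
    using QL by (auto simp: orth_at_point_def)
  have xL: "x \<in> L" and xH: "x \<in> H4" using x hyp_subspace_subset_H4[OF L] by auto
  have xP: "x \<in> span P" using xL P(2) by (auto intro: span_base)
  obtain e where e: "e \<in> span L" "minner e x = 0" "e \<noteq> 0"
    using exists_minner_orthogonal_in_subspace[OF hyp_subspaceD(1)[OF L] span_base[OF xL] xH]
      hyp_subspaceD(2)[OF L] by auto
  obtain m where m: "m \<noteq> 0" "span Q \<subseteq> {v. minner v m = 0}" "span P \<subseteq> {v. minner v m = 0}"
    using exists_common_minner_normal[OF Q P(1) QP] .
  define VS where "VS = {v. minner v e = 0}"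
  define VT where "VT = {v. minner v m = 0}"
  have S: "hyp_hyperplane (VS \<inter> H4)" "orth_at_point (VS \<inter> H4) L"
    using hyp_hyperplane_minner_orthogonal[OF e(3) xH] orth_at_point_minner_orthogonal[OF L xL e]
      e(2) minner_commute unfolding VS_def by metis+
  have xT: "x \<in> VT" using xP m(3) by (auto simp: VT_def)
  have T: "hyp_hyperplane (VT \<inter> H4)" "P \<subseteq> VT \<inter> H4"
    using hyp_hyperplane_minner_orthogonal[OF m(1) xH] xT m(3) hyp_subspace_subset_H4[OF P(1)]
    by (auto simp: VT_def dest: span_base)
  have "span Q \<subseteq> VS"
    using span_subset_minner_orthogonal_if_orth_at_point[OF x tQL xH] e
    by (simp add: VS_def tangent_def)
  moreover have "span Q \<subseteq> VT" using m(2) by (simp add: VT_def)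
  moreover have "minner e m = 0" using e(1) span_mono[OF P(2)] m(3) by auto
  then have "m \<in> VS" by (simp add: VS_def minner_commute)
  moreover have "m \<notin> VT"
    using minner_self_pos_if_orthogonal_H4[OF xH _ m(1)] xT by (simp add: VT_def minner_commute)
  ultimately have "span Q = VS \<inter> VT"
    using hyp_subspaceD(1,2)[OF Q] dim_minner_orthogonal[OF e(3)]
    by (intro subspace_eq_Int_if_dim_Suc) (auto simp: VS_def VT_def subspace_minner_orthogonal)
  then have "bdry Q = bdry (VS \<inter> H4) \<inter> bdry (VT \<inter> H4)"
    using bdry_hyp_subspace[OF Q] bdry_Int_H4[OF _ _ xH] xT e(2) ideal_points_Int
    by (simp add: VS_def VT_def subspace_minner_orthogonal minner_commute[of x])
  then show ?thesis by (rule that[OF S T])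
qed

lemma orth_along_line_if_subset_orth_at_point:
  assumes L: "hyp_line L" and P: "hyp_plane P" "L \<subseteq> P"
    and S: "hyp_hyperplane S" "orth_at_point S L" and QS: "Q \<subseteq> S" "Q \<inter> P = S \<inter> P"
  shows "orth_along_line Q P"
proof -
  obtain x where x: "S \<inter> L = {x}" and tSL: "\<forall>u\<in>tangent S x. \<forall>v\<in>tangent L x. minner u v = 0"
    using S(2) by (auto simp: orth_at_point_def)
  have xSP: "x \<in> S \<inter> P" and xH: "x \<in> H4" using x P(2) hyp_subspace_subset_H4[OF L] by auto
  \<comment> \<open>a tangent vector of Q orthogonal to S \<inter> P lies in S, so it is orthogonal to L as well\<close>
  have "minner u v = 0"
    if y: "y \<in> S \<inter> P" and u: "u \<in> tangent Q y" and v: "v \<in> tangent P y"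
      and hu: "\<forall>w\<in>tangent (S \<inter> P) y. minner u w = 0" for y u v
  proof -
    have yH: "y \<in> H4" using y hyp_subspace_subset_H4[OF S(1)] by blast
    have uSP: "minner u w = 0" if "w \<in> span (S \<inter> P)" for w
      using minner_span_eq_0_if_orthogonal_tangent[OF y yH _ hu that] u by (simp add: tangent_def)
    have "minner u x = 0" using uSP xSP span_base by blast
    moreover have "u \<in> span S" using u span_mono[OF QS(1)] by (auto simp: tangent_def)
    ultimately have "u \<in> tangent S x" by (simp add: tangent_def)
    then have "\<forall>w\<in>tangent L x. minner u w = 0" using tSL by blast
    then have uL: "minner u w = 0" if "w \<in> span L" for w
      using minner_span_eq_0_if_orthogonal_tangent[OF _ xH \<open>minner u x = 0\<close> _ that] x by blast
    obtain a b where "v = a + b" "a \<in> span (S \<inter> P)" "b \<in> span L"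
      using v span_plane_eq_sums_if_orth_at_point[OF L P S] by (auto simp: tangent_def)
    then show ?thesis using uSP uL by (simp add: minner_simps)
  qed
  then show ?thesis
    using hyp_line_Int_plane_if_orth_at_point[OF L P S]
    unfolding orth_along_line_def QS(2) by blast
qed

lemma orthogonal_if_bdry_eq_Int:
  assumes L: "hyp_line L" and P: "hyp_plane P" "L \<subseteq> P" and Q: "hyp_plane Q"
    and S: "hyp_hyperplane S" "orth_at_point S L" and T: "hyp_hyperplane T" "P \<subseteq> T"
    and B: "bdry Q = bdry S \<inter> bdry T"
  shows "orth_at_point Q L" "orth_along_line Q P"
proof -
  have "span L \<subseteq> span T" using P(2) T(2) by (intro span_mono) blast
  then have "S \<noteq> T" using span_not_subset_if_orth_at_point[OF L S(1,2)] by auto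
  then have QST: "Q = S \<inter> T" using hyp_subspace_eq_Int_if_bdry_eq_Int[OF Q _ S(1) T(1) _ _ B] by simp
  then show "orth_at_point Q L" using orth_at_point_subset[OF S(2)] P(2) T(2) by blast
  show "orth_along_line Q P"
    using QST T(2) by (intro orth_along_line_if_subset_orth_at_point[OF L P S]) auto
qed

theorem theorem5p9:
  fixes g :: "real^5 \<Rightarrow> real^5" and L P Q :: "(real^5) set"
  assumes "pure_loxodromic g L P"
    and "hyp_plane Q"
  shows "(orth_at_point Q L \<and> orth_along_line Q P) \<longleftrightarrow> bdry Q \<in> half_turn_bank L P"
proof -
  note lox = pure_loxodromicD[OF assms(1)]
  have bank: "bdry Q \<in> half_turn_bank L P \<longleftrightarrow> (\<exists>S T. hyp_hyperplane S \<and> orth_at_point S L \<and>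
      hyp_hyperplane T \<and> P \<subseteq> T \<and> bdry Q = bdry S \<inter> bdry T)"
    unfolding half_turn_bank_def permuted_pencil_def twisting_pencil_def by blast
  show ?thesis
  proof
    assume "orth_at_point Q L \<and> orth_along_line Q P"
    then show "bdry Q \<in> half_turn_bank L P"
      using exists_hyperplanes_if_orthogonal[OF lox assms(2)] bank
      by (metis orth_along_line_def)
  next
    assume "bdry Q \<in> half_turn_bank L P"
    then show "orth_at_point Q L \<and> orth_along_line Q P"
      using orthogonal_if_bdry_eq_Int[OF lox assms(2)] bank by blast
  qed
qed

end
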